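(* Let $k$ be an algebraically closed field and $(B,\varepsilon)$ a finite-dimensional commutative Frobenius algebra over $k$ (the zero algebra allowed). Then its generating function $Z_{(B,\varepsilon)}(T)$ has one of the two forms (1) $Z=\mu+mT+\sum_{i=1}^s\frac{m_i\lambda_i^{-1}}{1-\lambda_iT}$ with $\mu\in k$, $m\in\{2,3,\dots\}$, $s\ge0$, $m_i\in\{1,2,\dots\}$, $\lambda_i\in k^\times$; (2) $Z=\sum_{i=1}^s\frac{m_i\lambda_i^{-1}}{1-\lambda_iT}$ with $s\ge0$, $m_i\in\{1,2,\dots\}$, $\lambda_i\in k^\times$. Conversely, every power series of form (1) or (2), for all values of the parameters, is $Z_{(B,\varepsilon)}$ for some finite-dimensional commutative Frobenius algebra $(B,\varepsilon)$ over $k$.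
   Context: A commutative Frobenius algebra $(B,\varepsilon)$ over $k$ is a finite-dimensional commutative $k$-algebra $B$ with a $k$-linear map $\varepsilon:B\to k$ such that $(x,y)\mapsto\varepsilon(xy)$ is nondegenerate. Its handle element is $h_B=\sum_{i=1}^r u_iv_i$ where $\{u_i\}$ is a basis of $B$ and $\{v_i\}$ the dual basis with $\varepsilon(u_iv_j)=\delta_{ij}$ (independent of the basis). The generating function is $Z_{(B,\varepsilon)}(T)=\sum_{g\ge0}\varepsilon(h_B^g)T^g\in k[[T]]$; $\varepsilon(h_B^g)$ is the value of the closed connected oriented genus-$g$ surface in the 2D TQFT determined by $(B,\varepsilon)$. Rational functions are identified with their power series expansions at $T=0$. *)

theory Defs
  imports "HOL-Computational_Algebra.Polynomial" "HOL-Computational_Algebra.Formal_Power_Series"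
begin

text \<open>
  A finite-dimensional commutative algebra over a field k is encoded by a basis
  e_0,...,e_{r-1} (r = dim B, r = 0 is the zero algebra) and its structure constants:
  e_i * e_j = sum_l c i j l e_l.  Elements of B are coordinate vectors nat => k
  vanishing from index r on.
\<close>

definition vecs :: "nat \<Rightarrow> (nat \<Rightarrow> 'k::field) set" where
  "vecs r = {x. \<forall>i\<ge>r. x i = 0}"

definition bvec :: "nat \<Rightarrow> nat \<Rightarrow> 'k::field" where
  "bvec i = (\<lambda>l. if l = i then 1 else 0)"

definition amult :: "nat \<Rightarrow> (nat \<Rightarrow> nat \<Rightarrow> nat \<Rightarrow> 'k::field)
    \<Rightarrow> (nat \<Rightarrow> 'k) \<Rightarrow> (nat \<Rightarrow> 'k) \<Rightarrow> (nat \<Rightarrow> 'k)" where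
  "amult r c x y = (\<lambda>l. if l < r then (\<Sum>i<r. \<Sum>j<r. x i * y j * c i j l) else 0)"

definition counit :: "nat \<Rightarrow> (nat \<Rightarrow> 'k::field) \<Rightarrow> (nat \<Rightarrow> 'k) \<Rightarrow> 'k" where
  "counit r e x = (\<Sum>i<r. e i * x i)"

definition comm_frobenius ::
  "nat \<Rightarrow> (nat \<Rightarrow> nat \<Rightarrow> nat \<Rightarrow> 'k::field) \<Rightarrow> (nat \<Rightarrow> 'k) \<Rightarrow> (nat \<Rightarrow> 'k) \<Rightarrow> bool" where
  "comm_frobenius r c u e \<longleftrightarrow>
     (\<forall>x\<in>vecs r. \<forall>y\<in>vecs r. amult r c x y = amult r c y x) \<and>
     (\<forall>x\<in>vecs r. \<forall>y\<in>vecs r. \<forall>z\<in>vecs r.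
        amult r c (amult r c x y) z = amult r c x (amult r c y z)) \<and>
     u \<in> vecs r \<and> (\<forall>x\<in>vecs r. amult r c u x = x) \<and>
     (\<forall>x\<in>vecs r. (\<forall>y\<in>vecs r. counit r e (amult r c x y) = 0) \<longrightarrow> x = (\<lambda>_. 0))"

definition is_dual_basis ::
  "nat \<Rightarrow> (nat \<Rightarrow> nat \<Rightarrow> nat \<Rightarrow> 'k::field) \<Rightarrow> (nat \<Rightarrow> 'k) \<Rightarrow> (nat \<Rightarrow> nat \<Rightarrow> 'k) \<Rightarrow> bool" where
  "is_dual_basis r c e v \<longleftrightarrow> (\<forall>j<r. v j \<in> vecs r) \<and>
     (\<forall>i<r. \<forall>j<r. counit r e (amult r c (bvec i) (v j)) = (if i = j then 1 else 0))"

definition handle ::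
  "nat \<Rightarrow> (nat \<Rightarrow> nat \<Rightarrow> nat \<Rightarrow> 'k::field) \<Rightarrow> (nat \<Rightarrow> 'k) \<Rightarrow> nat \<Rightarrow> 'k" where
  "handle r c e = (let v = (SOME v. is_dual_basis r c e v) in
     (\<lambda>l. \<Sum>i<r. amult r c (bvec i) (v i) l))"

definition genfun ::
  "nat \<Rightarrow> (nat \<Rightarrow> nat \<Rightarrow> nat \<Rightarrow> 'k::field) \<Rightarrow> (nat \<Rightarrow> 'k) \<Rightarrow> (nat \<Rightarrow> 'k) \<Rightarrow> 'k fps" where
  "genfun r c u e = Abs_fps (\<lambda>g. counit r e ((amult r c (handle r c e) ^^ g) u))"

definition geom_part :: "nat \<Rightarrow> (nat \<Rightarrow> nat) \<Rightarrow> (nat \<Rightarrow> 'k::field) \<Rightarrow> 'k fps" where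
  "geom_part s ms lams =
     (\<Sum>i<s. fps_const (of_nat (ms i) / lams i) * inverse (1 - fps_const (lams i) * fps_X))"

definition form1 :: "'k::field fps \<Rightarrow> bool" where
  "form1 F \<longleftrightarrow> (\<exists>\<mu> (m::nat) s ms lams. m \<ge> 2 \<and> (\<forall>i<s. ms i \<ge> 1 \<and> lams i \<noteq> 0) \<and>
      F = fps_const \<mu> + fps_const (of_nat m) * fps_X + geom_part s ms lams)"

definition form2 :: "'k::field fps \<Rightarrow> bool" where
  "form2 F \<longleftrightarrow> (\<exists>s ms lams. (\<forall>i<s. ms i \<ge> 1 \<and> lams i \<noteq> 0) \<and>
      F = geom_part s ms lams)"

end

theory Submission
  imports Defs "Jordan_Normal_Form.Schur_Decomposition" "Jordan_Normal_Form.DL_Rank"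
begin

text \<open>Let \<open>L\<^sub>x\<close> be the matrix of multiplication by \<open>x\<close>. A dual basis computation gives
  \<open>\<epsilon>(h x) = tr L\<^sub>x\<close>, so \<open>Z\<^sub>g\<^sub>+\<^sub>1 = tr L\<^sub>h\<^sup>g = \<Sum>\<^sub>i d\<^sub>i\<^sup>g\<close> over the eigenvalues \<open>d\<^sub>i\<close> of \<open>L\<^sub>h\<close>
  (triangularize over the algebraically closed field) and \<open>Z\<^sub>0 = \<epsilon>(1)\<close>. Nonzero eigenvalues give
  the geometric terms, and the zero eigenvalues contribute their multiplicity to the coefficient of
  \<open>T\<close>. If \<open>0\<close> is not an eigenvalue, \<open>h\<close> is invertible and \<open>\<epsilon>(1) = tr L\<^sub>h\<^sup>-\<^sup>1 = \<Sum>\<^sub>i 1/d\<^sub>i\<close>,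
  which is form (2). A simple eigenvalue \<open>0\<close> is impossible: for \<open>q = \<Prod> (X - d\<^sub>i)\<close> over the nonzero
  \<open>d\<^sub>i\<close>, Cayley--Hamilton gives \<open>h q(h) = 0\<close>, while \<open>\<epsilon>(h q(h)) = tr q(L\<^sub>h) = q(0) \<noteq> 0\<close>.
  Conversely, \<open>k[x]/(x\<^sup>m) \<times> k\<^sup>N\<close> with a suitable counit realizes every series of either form.\<close>

section \<open>Traces and triangular matrices\<close>

lemma sum_eq_single:
  assumes "finite S" "k \<in> S" "\<And>j. j \<in> S \<Longrightarrow> j \<noteq> k \<Longrightarrow> g j = 0"
  shows "sum g S = g k"
proof -
  have "sum g S = sum g {k}"
    by (rule sum.mono_neutral_right) (use assms in auto)
  thus ?thesis by simp
qed

lemma index_mult_mat_sum: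
  assumes "A \<in> carrier_mat n m" "B \<in> carrier_mat m p" "i < n" "j < p"
  shows "(A * B) $$ (i,j) = (\<Sum>k<m. A $$ (i,k) * B $$ (k,j))"
  using assms by (auto simp: scalar_prod_def intro!: sum.cong)

definition mat_trace :: "'a::comm_ring_1 mat \<Rightarrow> 'a" where
  "mat_trace M = (\<Sum>i<dim_row M. M $$ (i,i))"

lemma mat_trace_mult_comm:
  assumes "X \<in> carrier_mat n n" "Y \<in> carrier_mat n n"
  shows "mat_trace (X * Y) = mat_trace (Y * X)"
proof -
  have "mat_trace (X * Y) = (\<Sum>i<n. \<Sum>k<n. X $$ (i,k) * Y $$ (k,i))"
    using assms by (simp add: mat_trace_def index_mult_mat_sum[OF assms] del: index_mult_mat(1))
  also have "\<dots> = (\<Sum>k<n. \<Sum>i<n. Y $$ (k,i) * X $$ (i,k))"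
    by (subst sum.swap) (simp add: mult.commute)
  also have "\<dots> = mat_trace (Y * X)"
    using assms by (simp add: mat_trace_def index_mult_mat_sum[OF assms(2,1)] del: index_mult_mat(1))
  finally show ?thesis .
qed

lemma mat_trace_conjugate:
  assumes "P \<in> carrier_mat n n" "S \<in> carrier_mat n n" "Q \<in> carrier_mat n n" "Q * P = 1\<^sub>m n"
  shows "mat_trace (P * S * Q) = mat_trace S"
proof -
  have "mat_trace (P * S * Q) = mat_trace (P * (S * Q))"
    using assms by (simp add: assoc_mult_mat[of _ n n _ n _ n])
  also have "\<dots> = mat_trace ((S * Q) * P)"
    using assms by (intro mat_trace_mult_comm[of _ n]) auto
  also have "\<dots> = mat_trace S"
    using assms by (simp add: assoc_mult_mat[of _ n n _ n _ n])
  finally show ?thesis .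
qed

lemma similar_mat_wit_trace:
  assumes "similar_mat_wit A B P Q" "A \<in> carrier_mat n n"
  shows "mat_trace A = mat_trace B"
  using similar_mat_witD2[OF assms(2,1)] mat_trace_conjugate[of P n B Q] by simp

lemma upper_triangular_mult:
  fixes A B :: "'a::comm_ring_1 mat"
  assumes A: "A \<in> carrier_mat n n" and B: "B \<in> carrier_mat n n"
    and ut: "upper_triangular A" "upper_triangular B"
  shows "upper_triangular (A * B)" "\<And>i. i < n \<Longrightarrow> (A * B) $$ (i,i) = A $$ (i,i) * B $$ (i,i)"
proof -
  have vanish: "A $$ (i,k) * B $$ (k,j) = 0" if "i < n" "k < n" "k < i \<or> j < k" for i j k
    using that A B upper_triangularD[OF ut(1), of k i] upper_triangularD[OF ut(2), of j k] by auto
  show "upper_triangular (A * B)"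
    using A B by (intro upper_triangularI)
      (auto simp: index_mult_mat_sum intro!: sum.neutral vanish simp del: index_mult_mat(1))
  fix i assume i: "i < n"
  have "(A * B) $$ (i,i) = (\<Sum>k<n. A $$ (i,k) * B $$ (k,i))"
    using i by (intro index_mult_mat_sum[OF A B])
  also have "\<dots> = A $$ (i,i) * B $$ (i,i)"
    using i vanish by (intro sum_eq_single) (auto simp: nat_neq_iff)
  finally show "(A * B) $$ (i,i) = A $$ (i,i) * B $$ (i,i)" .
qed

lemma upper_triangular_pow:
  fixes A :: "'a::comm_ring_1 mat"
  assumes "A \<in> carrier_mat n n" "upper_triangular A"
  shows "upper_triangular (A ^\<^sub>m k) \<and> (\<forall>i<n. (A ^\<^sub>m k) $$ (i,i) = A $$ (i,i) ^ k)"
proof (induct k)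
  case 0 thus ?case using assms by auto
next
  case (Suc k)
  have "A ^\<^sub>m k \<in> carrier_mat n n" using assms by auto
  thus ?case using upper_triangular_mult[OF _ assms(1) _ assms(2)] Suc by (auto simp: mult.commute)
qed

lemma mat_trace_upper_triangular_pow:
  fixes T :: "'a::comm_ring_1 mat"
  assumes "T \<in> carrier_mat n n" "upper_triangular T"
  shows "mat_trace (T ^\<^sub>m k) = (\<Sum>i<n. T $$ (i,i) ^ k)"
  using upper_triangular_pow[OF assms, of k] assms(1) by (simp add: mat_trace_def)

lemma upper_triangular_minus_smult_one:
  fixes A :: "'a::comm_ring_1 mat"
  assumes "A \<in> carrier_mat n n" "upper_triangular A"
  shows "upper_triangular (A - d \<cdot>\<^sub>m 1\<^sub>m n)"
    "\<And>i. i < n \<Longrightarrow> (A - d \<cdot>\<^sub>m 1\<^sub>m n) $$ (i,i) = A $$ (i,i) - d"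
  using assms upper_triangularD[OF assms(2)] by (auto intro!: upper_triangularI)

lemma upper_triangular_right_inverse_diag:
  fixes T S :: "'a::field mat"
  assumes T: "T \<in> carrier_mat n n" and S: "S \<in> carrier_mat n n" and ut: "upper_triangular T"
    and TS: "T * S = 1\<^sub>m n" and nz: "\<And>i. i < n \<Longrightarrow> T $$ (i,i) \<noteq> 0"
    and i: "i < n"
  shows "S $$ (i,i) = 1 / T $$ (i,i)"
proof -
  have T0: "T $$ (i,k) = 0" if "k < i" "i < n" for i k
    using upper_triangularD[OF ut that(1)] T that by simp
  have row_expand: "(T * S) $$ (i,j) = T $$ (i,i) * S $$ (i,j)"
    if "i < n" "j < n" "\<And>k. i < k \<Longrightarrow> k < n \<Longrightarrow> S $$ (k,j) = 0" for i j
  proof -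
    have "(T * S) $$ (i,j) = (\<Sum>k<n. T $$ (i,k) * S $$ (k,j))"
      using that by (intro index_mult_mat_sum[OF T S])
    also have "\<dots> = T $$ (i,i) * S $$ (i,j)"
      using that T0 by (intro sum_eq_single) (auto simp: nat_neq_iff)
    finally show ?thesis .
  qed
  have lower_zero: "S $$ (i,j) = 0" if "j < i" "i < n" "n - i \<le> q" for i j q
    using that
  proof (induct q arbitrary: i)
    case (Suc q)
    have "0 = (T * S) $$ (i,j)" using TS Suc.prems by simp
    also have "\<dots> = T $$ (i,i) * S $$ (i,j)"
      using Suc by (intro row_expand) auto
    finally show ?case using nz[of i] Suc.prems by simp
  qed simp
  have "1 = (T * S) $$ (i,i)" using TS i by simp
  also have "\<dots> = T $$ (i,i) * S $$ (i,i)"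
    using i lower_zero by (intro row_expand) auto
  finally show ?thesis using nz[OF i] by (simp add: field_simps)
qed

section \<open>Triangularization over algebraically closed fields\<close>

lemma det_nonzero_imp_inverse:
  fixes A :: "'a::field mat"
  assumes A: "A \<in> carrier_mat n n" and d: "det A \<noteq> 0"
  obtains B where "B \<in> carrier_mat n n" "A * B = 1\<^sub>m n" "B * A = 1\<^sub>m n"
  using det_non_zero_imp_unit[OF A d, of "()"] that unfolding Units_def ring_mat_def by auto

lemma eigenvalue_exists:
  fixes A :: "'a::alg_closed_field mat"
  assumes A: "A \<in> carrier_mat n n" and n: "n > 0"
  obtains e where "eigenvalue A e"
proof -
  have "degree (char_poly A) > 0" using degree_monic_char_poly[OF A] n by simp
  from alg_closed_imp_poly_has_root[OF this] obtain x where "poly (char_poly A) x = 0" by blast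
  thus ?thesis using eigenvalue_root_char_poly[OF A] that by blast
qed

lemma similar_upper_triangular_diag_eigenvalue:
  fixes A :: "'a::field mat"
  assumes A: "A \<in> carrier_mat n n" and sim: "similar_mat_wit A T P Q"
    and ut: "upper_triangular T" and i: "i < n"
  shows "eigenvalue A (T $$ (i,i))"
proof -
  have T: "T \<in> carrier_mat n n" using similar_mat_witD2[OF A sim] by simp
  have "char_poly A = char_poly T"
    using sim by (intro char_poly_similar) (auto simp: similar_mat_def)
  also have "\<dots> = (\<Prod>a \<leftarrow> diag_mat T. [:- a, 1:])" by (rule char_poly_upper_triangular[OF T ut])
  finally have "poly (char_poly A) (T $$ (i,i)) = (\<Prod>a \<leftarrow> diag_mat T. T $$ (i,i) - a)"
    by (simp add: poly_prod_list o_def)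
  also have "\<dots> = 0"
    using i T by (auto simp: prod_list_zero_iff diag_mat_def)
  finally show ?thesis using eigenvalue_root_char_poly[OF A] by blast
qed

lemma similar_mat_eigenvector_first:
  fixes A :: "'a::field mat"
  assumes A: "A \<in> carrier_mat n n" and ev: "eigenvector A v e"
  obtains A' P Q where "similar_mat_wit A A' P Q" "\<And>i. i < n \<Longrightarrow> A' $$ (i,0) = (if i = 0 then e else 0)"
proof -
  have v: "v \<in> carrier_vec n" and v0: "v \<noteq> 0\<^sub>v n" and Av: "A *\<^sub>v v = e \<cdot>\<^sub>v v"
    using A ev unfolding eigenvector_def by auto
  interpret vec_space "TYPE('a)" n .
  define b where "b = basis_completion v"
  note bc = basis_completion[OF v v0, folded b_def]
  define W where "W = mat_of_cols n b"
  have W: "W \<in> carrier_mat n n" unfolding W_def using bc by auto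
  have "rank W = n"
    using lin_indpt_full_rank[OF W] bc W_def by auto
  hence "det W \<noteq> 0" using det_rank_iff[OF W] by simp
  then obtain W' where W': "W' \<in> carrier_mat n n" and WW': "W * W' = 1\<^sub>m n" and W'W: "W' * W = 1\<^sub>m n"
    using det_nonzero_imp_inverse[OF W] by blast
  define A' where "A' = W' * A * W"
  have A': "A' \<in> carrier_mat n n" using W W' A unfolding A'_def by auto
  have "W * A' * W' = (W * W') * A * (W * W')"
    unfolding A'_def using W W' A by (simp add: assoc_mult_mat[of _ n n _ n _ n])
  hence sim: "similar_mat_wit A A' W W'"
    using A WW' by (intro similar_mat_witI[OF WW' W'W _ A A' W W']) simp
  have col0: "A' $$ (i,0) = (if i = 0 then e else 0)" if i: "i < n" for i
  proof -
    have n0: "0 < n" using i by simp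
    have colW0: "col W 0 = v"
      using bc n0 unfolding W_def by (cases b) (auto simp: col_mat_of_cols)
    have AW: "A * W \<in> carrier_mat n n" using A W by auto
    have "A' $$ (i,0) = (W' * (A * W)) $$ (i,0)"
      unfolding A'_def using W W' A by (simp add: assoc_mult_mat[of _ n n _ n _ n])
    also have "\<dots> = row W' i \<bullet> col (A * W) 0"
      using i n0 W' AW by (subst index_mult_mat(1)) auto
    also have "col (A * W) 0 = e \<cdot>\<^sub>v col W 0"
      using colW0 n0 W A Av by (simp add: col_mult2 mult_mat_vec_def)
    also have "row W' i \<bullet> (e \<cdot>\<^sub>v col W 0) = e * (W' * W) $$ (i,0)"
      using W W' i n0 by (auto intro!: scalar_prod_smult_right)
    finally show ?thesis using W'W i n0 by simp
  qed
  show ?thesis by (rule that[OF sim col0])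
qed

lemma triangularize_with_eigenvalue:
  fixes A :: "'a::alg_closed_field mat"
  assumes "A \<in> carrier_mat n n" "eigenvalue A e"
  obtains T P Q where "similar_mat_wit A T P Q" "upper_triangular T" "T $$ (0,0) = e"
  using assms
proof (induct n arbitrary: A e thesis)
  case 0
  thus ?case using eigenvalue_imp_nonzero_dim by blast
next
  case (Suc n A e)
  have A: "A \<in> carrier_mat (1 + n) (1 + n)" using Suc by simp
  from Suc(4) obtain v where "eigenvector A v e" unfolding eigenvalue_def by blast
  then obtain A' P Q where simAA': "similar_mat_wit A A' P Q"
    and col0: "\<And>i. i < Suc n \<Longrightarrow> A' $$ (i,0) = (if i = 0 then e else 0)"
    using similar_mat_eigenvector_first[OF Suc(3)] by blast
  have A': "A' \<in> carrier_mat (1 + n) (1 + n)" using similar_mat_witD2[OF A simAA'] by simp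
  obtain A1 A2 A0 A3 where split: "split_block A' 1 1 = (A1, A2, A0, A3)"
    by (cases "split_block A' 1 1")
  from split_block[OF split] A' have A2: "A2 \<in> carrier_mat 1 n"
    and A3: "A3 \<in> carrier_mat n n" and A1: "A1 \<in> carrier_mat 1 1" and A0: "A0 \<in> carrier_mat n 1"
    and A'_block: "A' = four_block_mat A1 A2 A0 A3" by auto
  have A1_eq: "A1 = mat 1 1 (\<lambda>_. e)" and A0_eq: "A0 = 0\<^sub>m n 1"
    using split[unfolded split_block_def Let_def] col0 A' by auto
  have "\<exists>T3 P3 Q3. similar_mat_wit A3 T3 P3 Q3 \<and> upper_triangular T3"
  proof (cases "n = 0")
    case True
    have "upper_triangular A3" using A3 True by (intro upper_triangularI) simp
    thus ?thesis using similar_mat_wit_refl[OF A3] by blast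
  next
    case False
    then obtain e3 where "eigenvalue A3 e3" using eigenvalue_exists[OF A3] by blast
    show ?thesis by (rule Suc(1)[OF _ A3 \<open>eigenvalue A3 e3\<close>]) blast
  qed
  then obtain T3 P3 Q3 where sim3: "similar_mat_wit A3 T3 P3 Q3" and ut3: "upper_triangular T3"
    by blast
  from similar_mat_witD2[OF A3 sim3] have T3: "T3 \<in> carrier_mat n n"
    and P3: "P3 \<in> carrier_mat n n" and Q3: "Q3 \<in> carrier_mat n n" and PQ3: "P3 * Q3 = 1\<^sub>m n"
    by auto
  define T where "T = four_block_mat A1 (A2 * P3) A0 T3"
  have "A0 = P3 * A0 * 1\<^sub>m 1" unfolding A0_eq using P3 by auto
  hence simA'T: "similar_mat_wit A' T (four_block_mat (1\<^sub>m 1) (0\<^sub>m 1 n) (0\<^sub>m n 1) P3)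
      (four_block_mat (1\<^sub>m 1) (0\<^sub>m 1 n) (0\<^sub>m n 1) Q3)"
    unfolding A'_block T_def using PQ3 A2 P3 Q3
    by (intro similar_mat_wit_four_block[OF similar_mat_wit_refl[OF A1] sim3 _ _ A1 A3 A0]) auto
  have "upper_triangular T"
    unfolding T_def A0_eq A1_eq using T3 ut3 by (intro upper_triangular_four_block) auto
  moreover have "T $$ (0,0) = e" unfolding T_def A1_eq using A2 P3 T3 by auto
  ultimately show ?case by (rule Suc(2)[OF similar_mat_wit_trans[OF simAA' simA'T]])
qed

lemma triangularize_zero_first:
  fixes A :: "'a::alg_closed_field mat"
  assumes A: "A \<in> carrier_mat n n"
  obtains T P Q where "similar_mat_wit A T P Q" "upper_triangular T"
    "eigenvalue A 0 \<longrightarrow> T $$ (0,0) = 0"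
proof (cases "eigenvalue A 0")
  case True
  thus ?thesis using triangularize_with_eigenvalue[OF A True] that by metis
next
  case False
  show ?thesis
  proof (cases "n = 0")
    case True
    have "upper_triangular A" using A True by (intro upper_triangularI) simp
    thus ?thesis using that[OF similar_mat_wit_refl[OF A]] False by blast
  next
    case False
    then obtain e where "eigenvalue A e" using eigenvalue_exists[OF A] by blast
    thus ?thesis using triangularize_with_eigenvalue[OF A] that \<open>\<not> eigenvalue A 0\<close> by metis
  qed
qed

lemma mult_conjugate_mat:
  fixes P X Y Q :: "'a::comm_ring_1 mat"
  assumes "P \<in> carrier_mat n n" "X \<in> carrier_mat n n" "Y \<in> carrier_mat n n" "Q \<in> carrier_mat n n"
    and QP: "Q * P = 1\<^sub>m n"
  shows "(P * X * Q) * (P * Y * Q) = P * (X * Y) * Q"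
proof -
  have "(P * X * Q) * (P * Y * Q) = P * X * (Q * P) * Y * Q"
    using assms(1-4) by (simp add: assoc_mult_mat[of _ n n _ n _ n])
  also have "\<dots> = P * (X * Y) * Q"
    unfolding QP using assms by (simp add: assoc_mult_mat[of _ n n _ n _ n])
  finally show ?thesis .
qed

fun shifted_prod_mat :: "'a::comm_ring_1 mat \<Rightarrow> (nat \<Rightarrow> 'a) \<Rightarrow> nat \<Rightarrow> nat \<Rightarrow> 'a mat" where
  "shifted_prod_mat A f n 0 = 1\<^sub>m n"
| "shifted_prod_mat A f n (Suc m) = (A - f (n - Suc m) \<cdot>\<^sub>m 1\<^sub>m n) * shifted_prod_mat A f n m"

lemma shifted_prod_mat_carrier:
  "A \<in> carrier_mat n n \<Longrightarrow> shifted_prod_mat A f n m \<in> carrier_mat n n"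
  by (induct m) auto

lemma shifted_prod_mat_similar:
  fixes A T :: "'a::comm_ring_1 mat"
  assumes sim: "similar_mat_wit A T P Q" and A: "A \<in> carrier_mat n n"
  shows "shifted_prod_mat A f n m = P * shifted_prod_mat T f n m * Q"
proof (induct m)
  case 0
  thus ?case using similar_mat_witD2[OF A sim] by simp
next
  case (Suc m)
  note wit = similar_mat_witD2[OF A sim]
  define g where "g = f (n - Suc m)"
  have "P * (T - g \<cdot>\<^sub>m 1\<^sub>m n) * Q = (P * T - P * (g \<cdot>\<^sub>m 1\<^sub>m n)) * Q"
    using wit by (subst mult_minus_distrib_mat[of _ n n]) auto
  also have "\<dots> = P * T * Q - P * (g \<cdot>\<^sub>m 1\<^sub>m n) * Q"
    using wit by (subst minus_mult_distrib_mat[of _ n n]) auto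
  also have "P * (g \<cdot>\<^sub>m 1\<^sub>m n) = g \<cdot>\<^sub>m P"
    using wit by (subst mult_smult_distrib[of _ n n]) auto
  also have "(g \<cdot>\<^sub>m P) * Q = g \<cdot>\<^sub>m 1\<^sub>m n"
    using wit by (simp add: mult_smult_assoc_mat[of _ n n])
  finally have factor: "A - g \<cdot>\<^sub>m 1\<^sub>m n = P * (T - g \<cdot>\<^sub>m 1\<^sub>m n) * Q"
    using wit by simp
  have "shifted_prod_mat A f n (Suc m) = (P * (T - g \<cdot>\<^sub>m 1\<^sub>m n) * Q) * (P * shifted_prod_mat T f n m * Q)"
    using Suc factor by (simp add: g_def)
  also have "\<dots> = P * ((T - g \<cdot>\<^sub>m 1\<^sub>m n) * shifted_prod_mat T f n m) * Q"
    using wit shifted_prod_mat_carrier[OF wit(5)] by (intro mult_conjugate_mat) auto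
  finally show ?case by (simp add: g_def)
qed

lemma shifted_prod_mat_upper_triangular:
  fixes T :: "'a::comm_ring_1 mat"
  assumes T: "T \<in> carrier_mat n n" and ut: "upper_triangular T" and "m \<le> n"
  shows "upper_triangular (shifted_prod_mat T f n m) \<and>
    (\<forall>i<n. shifted_prod_mat T f n m $$ (i,i) = (\<Prod>j\<in>{n-m..<n}. T $$ (i,i) - f j))"
  using \<open>m \<le> n\<close>
proof (induct m)
  case (Suc m)
  define R where "R = shifted_prod_mat T f n m"
  have R: "R \<in> carrier_mat n n" unfolding R_def using shifted_prod_mat_carrier[OF T] .
  have F: "T - f (n - Suc m) \<cdot>\<^sub>m 1\<^sub>m n \<in> carrier_mat n n" using T by auto
  note factor = upper_triangular_minus_smult_one[OF T ut, where d = "f (n - Suc m)"]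
  note IH = Suc(1)[OF Suc_leD[OF Suc(2)], folded R_def]
  note prod = upper_triangular_mult[OF F R factor(1) conjunct1[OF IH]]
  have "{n - Suc m..<n} = insert (n - Suc m) {n - m..<n}" using Suc by auto
  thus ?case using IH factor(2) prod Suc(2) by (auto simp: R_def)
qed simp

text \<open>For \<open>m = n\<close> this is Cayley--Hamilton for triangular matrices.\<close>
lemma shifted_prod_mat_diag_rows_zero:
  fixes T :: "'a::comm_ring_1 mat"
  assumes T: "T \<in> carrier_mat n n" and ut: "upper_triangular T"
    and "m \<le> n" "n - m \<le> i" "i < n" "j < n"
  shows "shifted_prod_mat T (\<lambda>k. T $$ (k,k)) n m $$ (i,j) = 0"
  using assms(3-)
proof (induct m arbitrary: i)
  case (Suc m)
  let ?d = "\<lambda>k. T $$ (k,k)"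
  define N where "N = T - ?d (n - Suc m) \<cdot>\<^sub>m 1\<^sub>m n"
  define R where "R = shifted_prod_mat T ?d n m"
  have N: "N \<in> carrier_mat n n" unfolding N_def using T by auto
  have R: "R \<in> carrier_mat n n" unfolding R_def using shifted_prod_mat_carrier[OF T] by auto
  have "N $$ (i,k) * R $$ (k,j) = 0" if k: "k < n" for k
  proof (cases "k < i")
    case True
    thus ?thesis unfolding N_def using T k Suc upper_triangularD[OF ut True] by auto
  next
    case False
    show ?thesis
    proof (cases "n - m \<le> k")
      case True
      thus ?thesis unfolding R_def using Suc k by simp
    next
      case False
      hence "k = i" "i = n - Suc m" using \<open>\<not> k < i\<close> Suc by auto
      thus ?thesis unfolding N_def using T Suc by auto
    qed
  qed
  hence "(N * R) $$ (i,j) = 0"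
    using Suc by (simp add: index_mult_mat_sum[OF N R] del: index_mult_mat(1))
  thus ?case unfolding N_def R_def by simp
qed simp

lemma amult_vecs [simp]: "amult r c x y \<in> vecs r"
  by (simp add: vecs_def amult_def)

lemma bvec_vecs [simp]: "i < r \<Longrightarrow> bvec i \<in> vecs r"
  by (simp add: vecs_def bvec_def)

lemma vecs_basis_expansion:
  assumes "x \<in> vecs r"
  shows "x = (\<lambda>l. \<Sum>k<r. x k * bvec k l)"
proof
  fix l
  show "x l = (\<Sum>k<r. x k * bvec k l)"
  proof (cases "l < r")
    case True
    thus ?thesis by (subst sum_eq_single[of _ l]) (auto simp: bvec_def)
  next
    case False
    thus ?thesis using assms by (simp add: vecs_def bvec_def)
  qed
qed

lemma amult_sum_left:
  "amult r c (\<lambda>l. \<Sum>k\<in>S. a k * f k l) y = (\<lambda>l. \<Sum>k\<in>S. a k * amult r c (f k) y l)"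
proof
  fix l
  show "amult r c (\<lambda>l. \<Sum>k\<in>S. a k * f k l) y l = (\<Sum>k\<in>S. a k * amult r c (f k) y l)"
  proof (cases "l < r")
    case True
    have "amult r c (\<lambda>l. \<Sum>k\<in>S. a k * f k l) y l =
        (\<Sum>i<r. \<Sum>j<r. \<Sum>k\<in>S. a k * (f k i * y j * c i j l))"
      using True by (simp add: amult_def sum_distrib_right mult.assoc)
    also have "\<dots> = (\<Sum>i<r. \<Sum>k\<in>S. \<Sum>j<r. a k * (f k i * y j * c i j l))"
      by (rule sum.cong[OF refl], rule sum.swap)
    also have "\<dots> = (\<Sum>k\<in>S. \<Sum>i<r. \<Sum>j<r. a k * (f k i * y j * c i j l))"
      by (rule sum.swap)
    also have "\<dots> = (\<Sum>k\<in>S. a k * amult r c (f k) y l)"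
      using True by (simp add: amult_def sum_distrib_left)
    finally show ?thesis .
  next
    case False
    thus ?thesis by (simp add: amult_def)
  qed
qed

lemma amult_diff_left:
  "amult r c (\<lambda>l. x l - a * y l) z = (\<lambda>l. amult r c x z l - a * amult r c y z l)"
  by (rule ext) (simp add: amult_def algebra_simps sum_subtractf sum_distrib_left)

lemma amult_expand_left:
  "x \<in> vecs r \<Longrightarrow> amult r c x y = (\<lambda>l. \<Sum>k<r. x k * amult r c (bvec k) y l)"
  using amult_sum_left[of r c x bvec "{..<r}" y] vecs_basis_expansion[of x r] by simp

lemma counit_sum:
  "counit r e (\<lambda>l. \<Sum>k\<in>S. a k * f k l) = (\<Sum>k\<in>S. a k * counit r e (f k))"
proof -
  have "(\<Sum>i<r. e i * (\<Sum>k\<in>S. a k * f k i)) = (\<Sum>i<r. \<Sum>k\<in>S. e i * (a k * f k i))"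
    by (simp add: sum_distrib_left)
  also have "\<dots> = (\<Sum>k\<in>S. \<Sum>i<r. e i * (a k * f k i))"
    by (rule sum.swap)
  also have "\<dots> = (\<Sum>k\<in>S. a k * (\<Sum>i<r. e i * f k i))"
    by (simp add: sum_distrib_left algebra_simps)
  finally show ?thesis unfolding counit_def .
qed

lemma counit_diff: "counit r e (\<lambda>l. f l - a * g l) = counit r e f - a * counit r e g"
  by (simp add: counit_def algebra_simps sum_subtractf sum_distrib_left)

lemma counit_zero [simp]: "counit r e (\<lambda>_. 0) = 0"
  by (simp add: counit_def)

lemma counit_amult_expand_left:
  "x \<in> vecs r \<Longrightarrow> counit r e (amult r c x y) = (\<Sum>k<r. x k * counit r e (amult r c (bvec k) y))"
  using amult_expand_left[of x r c y] counit_sum[of r e x "\<lambda>k. amult r c (bvec k) y" "{..<r}"]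
  by simp

definition fun_of_vec :: "'k::field vec \<Rightarrow> nat \<Rightarrow> 'k" where
  "fun_of_vec w = (\<lambda>i. if i < dim_vec w then w $ i else 0)"

definition lmult_mat :: "nat \<Rightarrow> (nat \<Rightarrow> nat \<Rightarrow> nat \<Rightarrow> 'k::field) \<Rightarrow> (nat \<Rightarrow> 'k) \<Rightarrow> 'k mat" where
  "lmult_mat r c x = mat r r (\<lambda>(l,i). amult r c x (bvec i) l)"

lemma lmult_mat_carrier [simp]: "lmult_mat r c x \<in> carrier_mat r r"
  and lmult_mat_dim [simp]: "dim_row (lmult_mat r c x) = r" "dim_col (lmult_mat r c x) = r"
  by (simp_all add: lmult_mat_def)

lemma lmult_mat_index: "l < r \<Longrightarrow> i < r \<Longrightarrow> lmult_mat r c x $$ (l,i) = amult r c x (bvec i) l"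
  by (simp add: lmult_mat_def)

lemma lmult_mat_diff: "lmult_mat r c (\<lambda>l. x l - a * y l) = lmult_mat r c x - a \<cdot>\<^sub>m lmult_mat r c y"
  by (rule eq_matI) (auto simp: lmult_mat_def amult_diff_left)

lemma fun_of_vec_vec: "x \<in> vecs r \<Longrightarrow> fun_of_vec (vec r x) = x"
  by (rule ext) (auto simp: fun_of_vec_def vecs_def)

lemma vec_fun_of_vec: "w \<in> carrier_vec r \<Longrightarrow> vec r (fun_of_vec w) = w"
  by (auto simp: fun_of_vec_def)

lemma fun_of_vec_vecs [simp]: "w \<in> carrier_vec r \<Longrightarrow> fun_of_vec w \<in> vecs r"
  by (auto simp: fun_of_vec_def vecs_def)

lemma amult_bvec_right:
  assumes "i < r"
  shows "amult r c x (bvec i) l = (if l < r then (\<Sum>a<r. x a * c a i l) else 0)"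
proof -
  have "(\<Sum>j<r. x a * bvec i j * c a j l) = x a * c a i l" for a
    using assms by (subst sum_eq_single[of _ i]) (auto simp: bvec_def)
  thus ?thesis by (simp add: amult_def)
qed

lemma amult_eq_lmult_mat: "amult r c x y = fun_of_vec (lmult_mat r c x *\<^sub>v vec r y)"
proof
  fix l
  show "amult r c x y l = fun_of_vec (lmult_mat r c x *\<^sub>v vec r y) l"
  proof (cases "l < r")
    case True
    have "fun_of_vec (lmult_mat r c x *\<^sub>v vec r y) l = (\<Sum>i<r. (\<Sum>a<r. x a * c a i l) * y i)"
      using True by (auto simp: fun_of_vec_def lmult_mat_def scalar_prod_def amult_bvec_right
          lessThan_atLeast0 intro!: sum.cong)
    also have "\<dots> = (\<Sum>i<r. \<Sum>a<r. x a * y i * c a i l)"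
      by (simp add: sum_distrib_left sum_distrib_right mult_ac)
    also have "\<dots> = (\<Sum>a<r. \<Sum>i<r. x a * y i * c a i l)"
      by (rule sum.swap)
    also have "\<dots> = amult r c x y l" using True by (simp add: amult_def)
    finally show ?thesis by simp
  next
    case False
    thus ?thesis by (simp add: amult_def fun_of_vec_def)
  qed
qed

section \<open>Commutative Frobenius algebras\<close>

locale comm_frobenius_algebra =
  fixes r :: nat and c :: "nat \<Rightarrow> nat \<Rightarrow> nat \<Rightarrow> 'k::field" and u e :: "nat \<Rightarrow> 'k"
  assumes comm_frobenius: "comm_frobenius r c u e"
begin

lemma mult_commute: "x \<in> vecs r \<Longrightarrow> y \<in> vecs r \<Longrightarrow> amult r c x y = amult r c y x"
  and mult_assoc: "x \<in> vecs r \<Longrightarrow> y \<in> vecs r \<Longrightarrow> z \<in> vecs r \<Longrightarrow>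
    amult r c (amult r c x y) z = amult r c x (amult r c y z)"
  and unit_vecs [simp]: "u \<in> vecs r"
  and unit_mult: "x \<in> vecs r \<Longrightarrow> amult r c u x = x"
  and nondegenerate: "x \<in> vecs r \<Longrightarrow> (\<And>y. y \<in> vecs r \<Longrightarrow> counit r e (amult r c x y) = 0) \<Longrightarrow> x = (\<lambda>_. 0)"
  using comm_frobenius unfolding comm_frobenius_def by blast+

lemma mult_unit: "x \<in> vecs r \<Longrightarrow> amult r c x u = x"
  using mult_commute[of x u] unit_mult[of x] by simp

lemma counit_amult_expand_right:
  "x \<in> vecs r \<Longrightarrow> y \<in> vecs r \<Longrightarrow> counit r e (amult r c y x) = (\<Sum>k<r. x k * counit r e (amult r c (bvec k) y))"
  using counit_amult_expand_left[of x r e c y] mult_commute[of x y] by simp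

lemma lmult_mat_mult:
  assumes x: "x \<in> vecs r" and y: "y \<in> vecs r"
  shows "lmult_mat r c (amult r c x y) = lmult_mat r c x * lmult_mat r c y"
proof (rule eq_matI)
  fix l i assume "l < dim_row (lmult_mat r c x * lmult_mat r c y)" "i < dim_col (lmult_mat r c x * lmult_mat r c y)"
  hence l: "l < r" and i: "i < r" by auto
  have "lmult_mat r c (amult r c x y) $$ (l,i) = amult r c x (amult r c y (bvec i)) l"
    using l i x y by (simp add: lmult_mat_def mult_assoc)
  also have "\<dots> = (lmult_mat r c x *\<^sub>v vec r (amult r c y (bvec i))) $ l"
    using l by (simp add: amult_eq_lmult_mat[of r c x] fun_of_vec_def)
  also have "\<dots> = (\<Sum>k<r. lmult_mat r c x $$ (l,k) * lmult_mat r c y $$ (k,i))"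
    using l i by (auto simp: scalar_prod_def lmult_mat_def lessThan_atLeast0 intro!: sum.cong)
  also have "\<dots> = (lmult_mat r c x * lmult_mat r c y) $$ (l,i)"
    using l i by (simp add: index_mult_mat_sum[OF lmult_mat_carrier lmult_mat_carrier] del: index_mult_mat(1))
  finally show "lmult_mat r c (amult r c x y) $$ (l,i) = (lmult_mat r c x * lmult_mat r c y) $$ (l,i)" .
qed auto

lemma lmult_mat_unit: "lmult_mat r c u = 1\<^sub>m r"
proof (rule eq_matI)
  fix l i assume "l < dim_row (1\<^sub>m r)" "i < dim_col (1\<^sub>m r)"
  hence l: "l < r" and i: "i < r" by auto
  have "amult r c u (bvec i) = bvec i" using i by (simp add: unit_mult)
  thus "lmult_mat r c u $$ (l,i) = 1\<^sub>m r $$ (l,i)" using l i by (simp add: lmult_mat_def bvec_def)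
qed auto

lemma lmult_mat_eq_zero: "x \<in> vecs r \<Longrightarrow> lmult_mat r c x = 0\<^sub>m r r \<Longrightarrow> x = (\<lambda>_. 0)"
  using amult_eq_lmult_mat[of r c x u] mult_unit[of x] by (auto simp: fun_of_vec_def)

definition gram_mat :: "'k mat" where
  "gram_mat = mat r r (\<lambda>(i,j). counit r e (amult r c (bvec i) (bvec j)))"

lemma gram_mat_carrier: "gram_mat \<in> carrier_mat r r"
  by (simp add: gram_mat_def)

lemma gram_mat_mult_vec:
  assumes y: "y \<in> vecs r" and i: "i < r"
  shows "(gram_mat *\<^sub>v vec r y) $ i = counit r e (amult r c (bvec i) y)"
proof -
  have "(gram_mat *\<^sub>v vec r y) $ i = (\<Sum>k<r. y k * counit r e (amult r c (bvec k) (bvec i)))"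
    using i mult_commute[of "bvec i"]
    by (auto simp: gram_mat_def scalar_prod_def lessThan_atLeast0 mult.commute intro!: sum.cong)
  also have "\<dots> = counit r e (amult r c (bvec i) y)"
    using counit_amult_expand_right[OF y, of "bvec i"] i by simp
  finally show ?thesis .
qed

lemma gram_mat_det_nonzero: "det gram_mat \<noteq> 0"
proof
  assume "det gram_mat = 0"
  then obtain w where w: "w \<in> carrier_vec r" "w \<noteq> 0\<^sub>v r" "gram_mat *\<^sub>v w = 0\<^sub>v r"
    using det_0_iff_vec_prod_zero_field[OF gram_mat_carrier] by blast
  define y where "y = fun_of_vec w"
  have y: "y \<in> vecs r" and wy: "w = vec r y"
    unfolding y_def using w(1) vec_fun_of_vec[OF w(1)] by auto
  have "y = (\<lambda>_. 0)"
  proof (rule nondegenerate[OF y])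
    fix z :: "nat \<Rightarrow> 'k" assume z: "z \<in> vecs r"
    have "counit r e (amult r c y z) = (\<Sum>k<r. z k * counit r e (amult r c (bvec k) y))"
      using counit_amult_expand_right[OF z y] mult_commute[OF y z] by simp
    also have "\<dots> = 0"
      using gram_mat_mult_vec[OF y] w(3) by (simp add: wy[symmetric])
    finally show "counit r e (amult r c y z) = 0" .
  qed
  hence "w = 0\<^sub>v r" using wy by auto
  with w(2) show False ..
qed

lemma dual_basis_exists: "\<exists>v. is_dual_basis r c e v"
proof -
  obtain H where H: "H \<in> carrier_mat r r" and GH: "gram_mat * H = 1\<^sub>m r"
    using det_nonzero_imp_inverse[OF gram_mat_carrier gram_mat_det_nonzero] by blast
  define v where "v = (\<lambda>j k. if k < r then H $$ (k,j) else 0)"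
  have v: "v j \<in> vecs r" for j by (simp add: v_def vecs_def)
  have "counit r e (amult r c (bvec i) (v j)) = (if i = j then 1 else 0)" if i: "i < r" and j: "j < r" for i j
  proof -
    have "vec r (v j) = col H j" using j H by (auto simp: v_def)
    hence "counit r e (amult r c (bvec i) (v j)) = (gram_mat *\<^sub>v col H j) $ i"
      using gram_mat_mult_vec[OF v i, of j] by simp
    also have "\<dots> = (gram_mat * H) $$ (i,j)" using i j H gram_mat_carrier by simp
    finally show ?thesis using GH i j by simp
  qed
  thus ?thesis using v unfolding is_dual_basis_def by blast
qed

lemma handle_vecs: "handle r c e \<in> vecs r"
  unfolding handle_def Let_def by (simp add: vecs_def amult_def)

text \<open>\<open>\<epsilon>(b\<^sub>i v\<^sub>i x) = \<epsilon>((x b\<^sub>i) v\<^sub>i)\<close> is the \<open>i\<close>-th coordinate of \<open>x b\<^sub>i\<close>, i.e. the \<open>i\<close>-th diagonal entry of \<open>L\<^sub>x\<close>.\<close>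
lemma counit_handle_mult:
  assumes x: "x \<in> vecs r"
  shows "counit r e (amult r c (handle r c e) x) = mat_trace (lmult_mat r c x)"
proof -
  define v where "v = (SOME v. is_dual_basis r c e v)"
  have dual: "is_dual_basis r c e v" unfolding v_def using dual_basis_exists by (rule someI_ex)
  have v: "v i \<in> vecs r" if "i < r" for i using dual that by (simp add: is_dual_basis_def)
  have "amult r c (handle r c e) x = (\<lambda>l. \<Sum>i<r. 1 * amult r c (amult r c (bvec i) (v i)) x l)"
    unfolding handle_def Let_def v_def[symmetric] using amult_sum_left[of r c "\<lambda>_. 1"] by simp
  hence "counit r e (amult r c (handle r c e) x) = (\<Sum>i<r. counit r e (amult r c (amult r c (bvec i) (v i)) x))"
    using counit_sum[of r e "\<lambda>_. 1"] by simp
  also have "\<dots> = (\<Sum>i<r. lmult_mat r c x $$ (i,i))"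
  proof (rule sum.cong[OF refl])
    fix i assume "i \<in> {..<r}"
    hence i: "i < r" by simp
    have "amult r c (amult r c (bvec i) (v i)) x = amult r c (amult r c x (bvec i)) (v i)"
      using i v[OF i] x mult_commute mult_assoc by (metis amult_vecs bvec_vecs)
    hence "counit r e (amult r c (amult r c (bvec i) (v i)) x) =
        (\<Sum>k<r. amult r c x (bvec i) k * counit r e (amult r c (bvec k) (v i)))"
      using counit_amult_expand_left[of "amult r c x (bvec i)" r e c "v i"] by simp
    also have "\<dots> = (\<Sum>k<r. amult r c x (bvec i) k * (if k = i then 1 else 0))"
      using dual i by (auto simp: is_dual_basis_def intro!: sum.cong)
    also have "\<dots> = amult r c x (bvec i) i" using i by (subst sum_eq_single[of _ i]) auto
    also have "\<dots> = lmult_mat r c x $$ (i,i)" using i by (simp add: lmult_mat_index)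
    finally show "counit r e (amult r c (amult r c (bvec i) (v i)) x) = lmult_mat r c x $$ (i,i)" .
  qed
  also have "\<dots> = mat_trace (lmult_mat r c x)" by (simp add: mat_trace_def)
  finally show ?thesis .
qed

lemma lmult_mat_handle_pow: "lmult_mat r c ((amult r c (handle r c e) ^^ g) u) = lmult_mat r c (handle r c e) ^\<^sub>m g"
proof (induct g)
  case 0
  show ?case by (simp add: lmult_mat_unit)
next
  case (Suc g)
  have pow: "(amult r c (handle r c e) ^^ g) u \<in> vecs r" by (cases g) simp_all
  have "lmult_mat r c ((amult r c (handle r c e) ^^ Suc g) u) = lmult_mat r c (amult r c ((amult r c (handle r c e) ^^ g) u) (handle r c e))"
    using mult_commute[OF pow handle_vecs] by simp
  also have "\<dots> = lmult_mat r c (handle r c e) ^\<^sub>m g * lmult_mat r c (handle r c e)" by (simp add: lmult_mat_mult[OF pow handle_vecs] Suc)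
  finally show ?case by simp
qed

lemma genfun_nth_0: "fps_nth (genfun r c u e) 0 = counit r e u"
  by (simp add: genfun_def)

lemma genfun_nth_Suc: "fps_nth (genfun r c u e) (Suc g) = mat_trace (lmult_mat r c (handle r c e) ^\<^sub>m g)"
proof -
  have pow: "(amult r c (handle r c e) ^^ g) u \<in> vecs r" by (cases g) simp_all
  show ?thesis
    using counit_handle_mult[OF pow] by (simp add: genfun_def lmult_mat_handle_pow)
qed

lemma lmult_mat_right_inverse:
  assumes x: "x \<in> vecs r" and B: "B \<in> carrier_mat r r" and xB: "lmult_mat r c x * B = 1\<^sub>m r"
  obtains y where "y \<in> vecs r" "amult r c x y = u" "lmult_mat r c y = B"
proof
  define y where "y = fun_of_vec (B *\<^sub>v vec r u)"
  show y: "y \<in> vecs r" unfolding y_def using B by simp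
  have "amult r c x y = fun_of_vec ((lmult_mat r c x * B) *\<^sub>v vec r u)"
    unfolding amult_eq_lmult_mat y_def using B by (simp add: vec_fun_of_vec assoc_mult_mat_vec[of _ r r _ r])
  thus xy: "amult r c x y = u" using xB fun_of_vec_vec[OF unit_vecs] by simp
  have Bx: "B * lmult_mat r c x = 1\<^sub>m r"
    using mat_mult_left_right_inverse[OF lmult_mat_carrier B xB] .
  have "lmult_mat r c x * lmult_mat r c y = 1\<^sub>m r"
    using lmult_mat_mult[OF x y] xy lmult_mat_unit by simp
  hence "B * (lmult_mat r c x * lmult_mat r c y) = B" using B by simp
  thus "lmult_mat r c y = B"
    using Bx B by (simp add: assoc_mult_mat[of B r r _ r _ r, symmetric])
qed

lemma genfun_nth_Suc_triangular:
  assumes sim: "similar_mat_wit (lmult_mat r c (handle r c e)) T P Q" and ut: "upper_triangular T"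
  shows "fps_nth (genfun r c u e) (Suc g) = (\<Sum>i<r. T $$ (i,i) ^ g)"
proof -
  have T: "T \<in> carrier_mat r r" using similar_mat_witD2[OF lmult_mat_carrier sim] by simp
  have "fps_nth (genfun r c u e) (Suc g) = mat_trace (lmult_mat r c (handle r c e) ^\<^sub>m g)"
    by (rule genfun_nth_Suc)
  also have "\<dots> = mat_trace (T ^\<^sub>m g)"
    by (rule similar_mat_wit_trace[OF similar_mat_wit_pow[OF sim], where n = r]) simp
  also have "\<dots> = (\<Sum>i<r. T $$ (i,i) ^ g)"
    by (rule mat_trace_upper_triangular_pow[OF T ut])
  finally show ?thesis .
qed

text \<open>If \<open>h\<close> is invertible, \<open>\<epsilon>(1) = \<epsilon>(h h\<^sup>-\<^sup>1) = tr(L\<^sub>h\<^sup>-\<^sup>1)\<close>.\<close>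
lemma counit_unit_triangular:
  assumes sim: "similar_mat_wit (lmult_mat r c (handle r c e)) T P Q" and ut: "upper_triangular T"
    and nz: "\<And>i. i < r \<Longrightarrow> T $$ (i,i) \<noteq> 0"
  shows "counit r e u = (\<Sum>i<r. 1 / T $$ (i,i))"
proof -
  note wit = similar_mat_witD2[OF lmult_mat_carrier sim]
  have T: "T \<in> carrier_mat r r" and P: "P \<in> carrier_mat r r" and Q: "Q \<in> carrier_mat r r"
    using wit by auto
  have "det T \<noteq> 0"
    using upper_triangular_imp_det_eq_0_iff[OF T ut] nz T by (auto simp: diag_mat_def)
  then obtain S where S: "S \<in> carrier_mat r r" and TS: "T * S = 1\<^sub>m r"
    using det_nonzero_imp_inverse[OF T] by metis
  have "lmult_mat r c (handle r c e) * (P * S * Q) = P * (T * S) * Q"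
    using wit(3) mult_conjugate_mat[OF P T S Q wit(2)] by simp
  also have "\<dots> = 1\<^sub>m r" using TS wit(1) P by simp
  finally obtain y where y: "y \<in> vecs r" and hy: "amult r c (handle r c e) y = u"
      and Ly: "lmult_mat r c y = P * S * Q"
    using lmult_mat_right_inverse[OF handle_vecs] P S Q by (metis mult_carrier_mat)
  have "counit r e u = mat_trace (P * S * Q)" using counit_handle_mult[OF y] hy Ly by simp
  also have "\<dots> = mat_trace S" using mat_trace_conjugate[OF P S Q wit(2)] .
  also have "\<dots> = (\<Sum>i<r. 1 / T $$ (i,i))"
    using upper_triangular_right_inverse_diag[OF T S ut TS nz] S by (simp add: mat_trace_def)
  finally show ?thesis .
qed

fun handle_shifted_prod :: "(nat \<Rightarrow> 'k) \<Rightarrow> nat \<Rightarrow> nat \<Rightarrow> 'k" where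
  "handle_shifted_prod d 0 = u"
| "handle_shifted_prod d (Suc m) =
     amult r c (\<lambda>l. handle r c e l - d (r - Suc m) * u l) (handle_shifted_prod d m)"

lemma handle_shifted_prod_vecs: "handle_shifted_prod d m \<in> vecs r"
  by (cases m) simp_all

lemma lmult_mat_handle_shifted_prod:
  "lmult_mat r c (handle_shifted_prod d m) = shifted_prod_mat (lmult_mat r c (handle r c e)) d r m"
proof (induct m)
  case 0
  thus ?case by (simp add: lmult_mat_unit)
next
  case (Suc m)
  have "(\<lambda>l. handle r c e l - d (r - Suc m) * u l) \<in> vecs r"
    using handle_vecs unit_vecs by (auto simp: vecs_def)
  thus ?case
    using Suc by (simp add: lmult_mat_mult handle_shifted_prod_vecs lmult_mat_diff lmult_mat_unit)
qed

text \<open>With \<open>d\<^sub>0 = 0\<close>, the element \<open>w = (h - d\<^sub>1) \<cdots> (h - d\<^sub>r\<^sub>-\<^sub>1)\<close> satisfies \<open>h w = 0\<close> by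
  Cayley--Hamilton, while \<open>\<epsilon>(h w) = tr(L\<^sub>w) = \<Prod>\<^sub>j\<^sub>\<ge>\<^sub>1 (- d\<^sub>j)\<close>.\<close>
lemma triangular_zero_diag_not_simple:
  assumes sim: "similar_mat_wit (lmult_mat r c (handle r c e)) T P Q" and ut: "upper_triangular T"
    and r: "0 < r" and T0: "T $$ (0,0) = 0"
  shows "\<exists>i. 0 < i \<and> i < r \<and> T $$ (i,i) = 0"
proof (rule ccontr)
  assume "\<nexists>i. 0 < i \<and> i < r \<and> T $$ (i,i) = 0"
  hence nz: "\<And>i. 0 < i \<Longrightarrow> i < r \<Longrightarrow> T $$ (i,i) \<noteq> 0" by blast
  define d where "d = (\<lambda>k. T $$ (k,k))"
  define m where "m = r - 1"
  have rm: "r = Suc m" using r unfolding m_def by simp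
  note wit = similar_mat_witD2[OF lmult_mat_carrier sim]
  have T: "T \<in> carrier_mat r r" using wit by simp
  note prod_similar = shifted_prod_mat_similar[OF sim lmult_mat_carrier]
  have "shifted_prod_mat T d r r = 0\<^sub>m r r"
    using shifted_prod_mat_diag_rows_zero[OF T ut, of r] shifted_prod_mat_carrier[OF T, of d r]
    by (intro eq_matI) (auto simp: d_def)
  hence "lmult_mat r c (handle_shifted_prod d r) = 0\<^sub>m r r"
    using wit(6,7) by (simp add: lmult_mat_handle_shifted_prod prod_similar)
  hence "handle_shifted_prod d r = (\<lambda>_. 0)"
    by (rule lmult_mat_eq_zero[OF handle_shifted_prod_vecs])
  hence "handle_shifted_prod d (Suc m) = (\<lambda>_. 0)" using rm by simp
  moreover have "r - Suc m = 0" using rm by simp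
  hence "handle_shifted_prod d (Suc m) = amult r c (handle r c e) (handle_shifted_prod d m)"
    using T0 by (simp add: d_def)
  ultimately have "amult r c (handle r c e) (handle_shifted_prod d m) = (\<lambda>_. 0)" by simp
  hence "mat_trace (lmult_mat r c (handle_shifted_prod d m)) = 0"
    by (metis counit_handle_mult handle_shifted_prod_vecs counit_zero)
  hence "mat_trace (shifted_prod_mat T d r m) = 0"
    using wit(2,6,7) shifted_prod_mat_carrier[OF T]
    by (simp add: lmult_mat_handle_shifted_prod prod_similar mat_trace_conjugate)
  moreover have "shifted_prod_mat T d r m $$ (i,i) = 0" if "0 < i" "i < r" for i
    using shifted_prod_mat_diag_rows_zero[OF T ut, of m i i] that rm by (simp add: d_def)
  hence "mat_trace (shifted_prod_mat T d r m) = shifted_prod_mat T d r m $$ (0,0)"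
    unfolding mat_trace_def using shifted_prod_mat_carrier[OF T, of d m] r
    by (subst sum_eq_single[of _ 0]) auto
  moreover have "shifted_prod_mat T d r m $$ (0,0) = (\<Prod>j\<in>{1..<r}. - d j)"
    using shifted_prod_mat_upper_triangular[OF T ut, of m d] r T0 by (simp add: rm d_def)
  ultimately show False using nz by (simp add: d_def)
qed

lemma zero_diag_card_ge_two:
  assumes sim: "similar_mat_wit (lmult_mat r c (handle r c e)) T P Q" and ut: "upper_triangular T"
    and T0: "eigenvalue (lmult_mat r c (handle r c e)) 0 \<longrightarrow> T $$ (0,0) = 0"
    and i: "i < r" "T $$ (i,i) = 0"
  shows "card {i. i < r \<and> T $$ (i,i) = 0} \<ge> 2"
proof -
  have "eigenvalue (lmult_mat r c (handle r c e)) 0"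
    using similar_upper_triangular_diag_eigenvalue[OF lmult_mat_carrier sim ut i(1)] i(2) by simp
  hence "T $$ (0,0) = 0" "r > 0" using T0 i by auto
  then obtain j where "0 < j" "j < r" "T $$ (j,j) = 0"
    using triangular_zero_diag_not_simple[OF sim ut] by metis
  hence "{0, j} \<subseteq> {i. i < r \<and> T $$ (i,i) = 0}" using \<open>T $$ (0,0) = 0\<close> \<open>r > 0\<close> by auto
  moreover have "card {0, j} = 2" using \<open>0 < j\<close> by simp
  ultimately show ?thesis using card_mono[of "{i. i < r \<and> T $$ (i,i) = 0}" "{0, j}"] by simp
qed

end

section \<open>The generating function\<close>

lemma finite_sum_enumeration:
  fixes g :: "'a \<Rightarrow> 'b"
  assumes "finite S"
  obtains lam :: "nat \<Rightarrow> 'b"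
  where "\<And>f :: 'b \<Rightarrow> 'c::comm_monoid_add. (\<Sum>t<card S. f (lam t)) = (\<Sum>x\<in>S. f (g x))"
    and "\<And>t. t < card S \<Longrightarrow> lam t \<in> g ` S"
proof -
  obtain \<beta> where \<beta>: "bij_betw \<beta> {0..<card S} S" using ex_bij_betw_nat_finite[OF assms] by blast
  show ?thesis
  proof
    show "(\<Sum>t<card S. f ((g \<circ> \<beta>) t)) = (\<Sum>x\<in>S. f (g x))" for f :: "'b \<Rightarrow> 'c"
      using sum.reindex_bij_betw[OF \<beta>, of "\<lambda>x. f (g x)"] by (simp add: lessThan_atLeast0)
    show "(g \<circ> \<beta>) t \<in> g ` S" if "t < card S" for t
      using bij_betwE[OF \<beta>] that by auto
  qed
qed

lemma inverse_one_minus_const_X: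
  "inverse (1 - fps_const (a::'k::field) * fps_X) = Abs_fps (\<lambda>n. a ^ n)"
proof (rule fps_inverse_unique)
  have "(1 - fps_const a * fps_X) * Abs_fps (\<lambda>n. a ^ n) =
      Abs_fps (\<lambda>n. a ^ n) - fps_const a * (fps_X * Abs_fps (\<lambda>n. a ^ n))"
    by (simp only: left_diff_distrib mult_1 mult.assoc)
  thus "(1 - fps_const a * fps_X) * Abs_fps (\<lambda>n. a ^ n) = 1"
    by (intro fps_ext) (simp add: power_eq_if)
qed

lemma geom_part_nth:
  "fps_nth (geom_part s ms lams) g = (\<Sum>i<s. of_nat (ms i) / lams i * lams i ^ g)"
  by (simp add: geom_part_def fps_sum_nth inverse_one_minus_const_X)

lemma fps_eq_power_sums:
  fixes F :: "'k::field fps" and d :: "nat \<Rightarrow> 'k"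
  assumes coeffs: "\<And>g. fps_nth F (Suc g) = (\<Sum>i<r. d i ^ g)"
  obtains s lams where "\<forall>j<s. lams j \<noteq> 0"
    "F = fps_const (fps_nth F 0 - (\<Sum>i | i < r \<and> d i \<noteq> 0. 1 / d i))
       + fps_const (of_nat (card {i. i < r \<and> d i = 0})) * fps_X + geom_part s (\<lambda>_. 1) lams"
proof -
  define Z where "Z = {i. i < r \<and> d i = 0}"
  define NZ where "NZ = {i. i < r \<and> d i \<noteq> 0}"
  have fin: "finite NZ" "finite Z" unfolding NZ_def Z_def by auto
  obtain lams where sums: "\<And>f :: 'k \<Rightarrow> 'k. (\<Sum>j<card NZ. f (lams j)) = (\<Sum>i\<in>NZ. f (d i))"
    and lams: "\<And>j. j < card NZ \<Longrightarrow> lams j \<in> d ` NZ"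
    using finite_sum_enumeration[OF fin(1)] by metis
  have nz: "\<forall>j<card NZ. lams j \<noteq> 0" using lams unfolding NZ_def by fastforce
  have split: "(\<Sum>i<r. f i) = (\<Sum>i\<in>Z. f i) + (\<Sum>i\<in>NZ. f i)" for f :: "nat \<Rightarrow> 'k"
  proof -
    have "{..<r} = Z \<union> NZ" "Z \<inter> NZ = {}" unfolding NZ_def Z_def by auto
    thus ?thesis using fin by (simp add: sum.union_disjoint)
  qed
  have "F = fps_const (fps_nth F 0 - (\<Sum>i\<in>NZ. 1 / d i)) + fps_const (of_nat (card Z)) * fps_X
       + geom_part (card NZ) (\<lambda>_. 1) lams"
  proof (rule fps_ext)
    fix n
    show "fps_nth F n = fps_nth (fps_const (fps_nth F 0 - (\<Sum>i\<in>NZ. 1 / d i))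
        + fps_const (of_nat (card Z)) * fps_X + geom_part (card NZ) (\<lambda>_. 1) lams) n"
    proof (cases n)
      case 0
      thus ?thesis using sums[of "\<lambda>x. 1 / x"] by (simp add: geom_part_nth)
    next
      case (Suc g)
      have "(\<Sum>i\<in>Z. d i ^ g) = of_nat (card Z) * (if g = 0 then 1 else 0)"
        by (simp add: Z_def)
      moreover have "(\<Sum>i\<in>NZ. d i ^ g) = (\<Sum>j<card NZ. 1 / lams j * lams j ^ Suc g)"
        using sums[of "\<lambda>x. x ^ g"] nz by (auto intro: sum.cong)
      ultimately show ?thesis
        using Suc coeffs split by (simp add: geom_part_nth fps_X_nth)
    qed
  qed
  with nz that show ?thesis unfolding Z_def NZ_def by blast
qed

lemma genfun_form1_or_form2:
  fixes c :: "nat \<Rightarrow> nat \<Rightarrow> nat \<Rightarrow> 'k::alg_closed_field"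
  assumes "comm_frobenius r c u e"
  shows "form1 (genfun r c u e) \<or> form2 (genfun r c u e)"
proof -
  interpret comm_frobenius_algebra r c u e by (rule comm_frobenius_algebra.intro) fact
  let ?A = "lmult_mat r c (handle r c e)" and ?F = "genfun r c u e"
  obtain T P Q where sim: "similar_mat_wit ?A T P Q" and ut: "upper_triangular T"
    and T0: "eigenvalue ?A 0 \<longrightarrow> T $$ (0,0) = 0"
    by (rule triangularize_zero_first[OF lmult_mat_carrier[of r c "handle r c e"]])
  obtain s lams where lams: "\<forall>j<s. lams j \<noteq> 0"
    and F: "?F = fps_const (fps_nth ?F 0 - (\<Sum>i | i < r \<and> T $$ (i,i) \<noteq> 0. 1 / T $$ (i,i)))
      + fps_const (of_nat (card {i. i < r \<and> T $$ (i,i) = 0})) * fps_X + geom_part s (\<lambda>_. 1) lams"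
    by (rule fps_eq_power_sums[OF genfun_nth_Suc_triangular[OF sim ut]])
  define Z where "Z = {i. i < r \<and> T $$ (i,i) = 0}"
  show ?thesis
  proof (cases "Z = {}")
    case True
    hence "fps_nth ?F 0 = (\<Sum>i | i < r \<and> T $$ (i,i) \<noteq> 0. 1 / T $$ (i,i))"
      using counit_unit_triangular[OF sim ut] genfun_nth_0 unfolding Z_def
      by (auto intro: sum.cong)
    hence "?F = geom_part s (\<lambda>_. 1) lams" using F True unfolding Z_def by simp
    hence "form2 ?F" unfolding form2_def using lams
      by (intro exI[of _ s] exI[of _ "\<lambda>_. 1"] exI[of _ lams]) simp
    thus ?thesis ..
  next
    case False
    then obtain i where "i < r" "T $$ (i,i) = 0" unfolding Z_def by auto
    hence "card Z \<ge> 2" unfolding Z_def by (rule zero_diag_card_ge_two[OF sim ut T0])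
    hence "form1 ?F" unfolding form1_def Z_def using F lams
      by (intro exI[of _ "fps_nth ?F 0 - (\<Sum>i | i < r \<and> T $$ (i,i) \<noteq> 0. 1 / T $$ (i,i))"]
          exI[of _ "card Z"] exI[of _ s] exI[of _ "\<lambda>_. 1"] exI[of _ lams]) (simp add: Z_def)
    thus ?thesis ..
  qed
qed

section \<open>The model algebras\<close>

lemma fps_mult_nth_cong:
  assumes "\<And>i. i \<le> l \<Longrightarrow> fps_nth f i = fps_nth f' i" "\<And>i. i \<le> l \<Longrightarrow> fps_nth g i = fps_nth g' i"
  shows "fps_nth (f * g) l = fps_nth (f' * g') l"
  using assms by (simp add: fps_mult_nth)

text \<open>The algebra \<open>k[x]/(x\<^sup>m) \<times> k\<^sup>N\<close> with basis \<open>1, x, \<dots>, x\<^sup>m\<^sup>-\<^sup>1\<close> (indices \<open>0..<m\<close>) followed by the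
  \<open>N\<close> primitive idempotents, and counit \<open>\<epsilon>(1) = \<mu>\<close>, \<open>\<epsilon>(x\<^sup>m\<^sup>-\<^sup>1) = 1\<close>, \<open>\<epsilon>(f\<^sub>t) = 1 / \<lambda>\<^sub>t\<close>.
  Its handle element is \<open>m x\<^sup>m\<^sup>-\<^sup>1 + \<Sum>\<^sub>t \<lambda>\<^sub>t f\<^sub>t\<close>. The case \<open>m = 1\<close> is excluded: then
  \<open>x\<^sup>m\<^sup>-\<^sup>1 = 1\<close> and this formula fails.\<close>
locale model_algebra =
  fixes m N :: nat and mu :: "'k::field" and lam :: "nat \<Rightarrow> 'k"
  assumes m: "m = 0 \<or> m \<ge> 2" and lam_nonzero: "\<And>t. t < N \<Longrightarrow> lam t \<noteq> 0"
    and mu: "m = 0 \<Longrightarrow> mu = 0"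
begin

definition model_dim :: nat where
  "model_dim = m + N"

definition model_coeffs :: "nat \<Rightarrow> nat \<Rightarrow> nat \<Rightarrow> 'k" where
  "model_coeffs i j l = (if l < m then (if i < m \<and> j < m \<and> i + j = l then 1 else 0)
     else if l < model_dim then (if i = l \<and> j = l then 1 else 0) else 0)"

definition model_mult :: "(nat \<Rightarrow> 'k) \<Rightarrow> (nat \<Rightarrow> 'k) \<Rightarrow> nat \<Rightarrow> 'k" where
  "model_mult x y l = (if l < m then fps_nth (Abs_fps x * Abs_fps y) l
     else if l < model_dim then x l * y l else 0)"

definition model_one :: "nat \<Rightarrow> 'k" where
  "model_one l = (if l < m then (if l = 0 then 1 else 0) else if l < model_dim then 1 else 0)"

definition model_counit :: "nat \<Rightarrow> 'k" where
  "model_counit i = (if i < m then (if i = 0 then mu else 0) + (if i = m - 1 then 1 else 0)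
     else if i < model_dim then 1 / lam (i - m) else 0)"

definition model_handle :: "nat \<Rightarrow> 'k" where
  "model_handle l = (if l < m then (if l = m - 1 then of_nat m else 0)
     else if l < model_dim then lam (l - m) else 0)"

lemma sum_model_dim: "(\<Sum>i<model_dim. f i) = (\<Sum>i<m. f i) + (\<Sum>t<N. f (m + t))"
  unfolding model_dim_def by (induct N) (simp_all add: add.assoc)

lemma amult_model: "amult model_dim model_coeffs x y = model_mult x y"
proof
  fix l
  show "amult model_dim model_coeffs x y l = model_mult x y l"
  proof (cases "l < m")
    case True
    hence l: "l < model_dim" unfolding model_dim_def by simp
    have "(\<Sum>j<model_dim. x i * y j * model_coeffs i j l) = (if i \<le> l then x i * y (l - i) else 0)"
      for i
    proof (cases "i \<le> l")
      case True
      have "(\<Sum>j<model_dim. x i * y j * model_coeffs i j l) = x i * y (l - i) * model_coeffs i (l - i) l"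
        by (rule sum_eq_single) (use True \<open>l < m\<close> l in \<open>auto simp: model_coeffs_def\<close>)
      thus ?thesis using True \<open>l < m\<close> by (simp add: model_coeffs_def)
    next
      case False
      thus ?thesis using \<open>l < m\<close> by (auto simp: model_coeffs_def intro!: sum.neutral)
    qed
    hence "amult model_dim model_coeffs x y l = (\<Sum>i<model_dim. if i \<le> l then x i * y (l - i) else 0)"
      using l by (simp add: amult_def)
    also have "\<dots> = (\<Sum>i\<in>{..<model_dim} \<inter> {i. i \<le> l}. x i * y (l - i))"
      by (simp add: sum.inter_restrict)
    also have "{..<model_dim} \<inter> {i. i \<le> l} = {0..l}" using l by auto
    finally show ?thesis using True by (simp add: model_mult_def fps_mult_nth)
  next
    case False
    show ?thesis
    proof (cases "l < model_dim")
      case True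
      have "amult model_dim model_coeffs x y l = (\<Sum>j<model_dim. x l * y j * model_coeffs l j l)"
        using True False
        by (simp add: amult_def, subst sum_eq_single[of _ l]) (auto simp: model_coeffs_def intro!: sum.neutral)
      also have "\<dots> = x l * y l"
        using True False by (subst sum_eq_single[of _ l]) (auto simp: model_coeffs_def)
      finally show ?thesis using True False by (simp add: model_mult_def)
    next
      case False
      thus ?thesis using \<open>\<not> l < m\<close> by (simp add: amult_def model_mult_def)
    qed
  qed
qed

lemma model_mult_commute: "model_mult x y = model_mult y x"
  by (rule ext) (simp add: model_mult_def mult.commute)

lemma model_mult_assoc: "model_mult (model_mult x y) z = model_mult x (model_mult y z)"
proof
  fix l
  show "model_mult (model_mult x y) z l = model_mult x (model_mult y z) l"
  proof (cases "l < m")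
    case True
    have "fps_nth (Abs_fps (model_mult x y) * Abs_fps z) l = fps_nth ((Abs_fps x * Abs_fps y) * Abs_fps z) l"
      using True by (intro fps_mult_nth_cong) (simp_all add: model_mult_def)
    also have "\<dots> = fps_nth (Abs_fps x * (Abs_fps y * Abs_fps z)) l" by (simp add: mult.assoc)
    also have "\<dots> = fps_nth (Abs_fps x * Abs_fps (model_mult y z)) l"
      using True by (intro fps_mult_nth_cong) (simp_all add: model_mult_def)
    finally show ?thesis using True by (simp add: model_mult_def)
  next
    case False
    thus ?thesis by (simp add: model_mult_def mult.assoc)
  qed
qed

lemma model_mult_bvec_low:
  assumes "l < m"
  shows "model_mult x (bvec k) l = (if k \<le> l then x (l - k) else 0)"
proof -
  have "model_mult x (bvec k) l = (\<Sum>i=0..l. x i * bvec k (l - i))"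
    using assms by (simp add: model_mult_def fps_mult_nth)
  also have "\<dots> = (if k \<le> l then x (l - k) else 0)"
  proof (cases "k \<le> l")
    case True
    thus ?thesis by (subst sum_eq_single[of _ "l - k"]) (auto simp: bvec_def)
  qed (auto simp: bvec_def intro!: sum.neutral)
  finally show ?thesis .
qed

lemma model_mult_high: "\<not> l < m \<Longrightarrow> l < model_dim \<Longrightarrow> model_mult x y l = x l * y l"
  by (simp add: model_mult_def)

lemma model_one_vecs: "model_one \<in> vecs model_dim"
  by (simp add: model_one_def vecs_def model_dim_def)

lemma model_handle_vecs: "model_handle \<in> vecs model_dim"
  by (simp add: model_handle_def vecs_def model_dim_def)

lemma model_one_mult: "x \<in> vecs model_dim \<Longrightarrow> model_mult model_one x = x"
proof
  fix l assume x: "x \<in> vecs model_dim"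
  show "model_mult model_one x l = x l"
  proof (cases "l < m")
    case True
    have "model_mult model_one x l = (\<Sum>i=0..l. model_one i * x (l - i))"
      using True by (simp add: model_mult_def fps_mult_nth)
    also have "\<dots> = x l"
      using True by (subst sum_eq_single[of _ 0]) (auto simp: model_one_def)
    finally show ?thesis .
  next
    case False
    thus ?thesis using x by (cases "l < model_dim") (auto simp: model_mult_def model_one_def vecs_def)
  qed
qed

lemma counit_model:
  "counit model_dim model_counit z =
     (if m = 0 then 0 else mu * z 0 + z (m - 1)) + (\<Sum>t<N. z (m + t) / lam t)"
proof -
  have "counit model_dim model_counit z =
      (\<Sum>i<m. model_counit i * z i) + (\<Sum>t<N. model_counit (m + t) * z (m + t))"
    unfolding counit_def by (rule sum_model_dim)
  also have "(\<Sum>t<N. model_counit (m + t) * z (m + t)) = (\<Sum>t<N. z (m + t) / lam t)"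
    by (rule sum.cong) (auto simp: model_counit_def model_dim_def)
  also have "(\<Sum>i<m. model_counit i * z i) = (if m = 0 then 0 else mu * z 0 + z (m - 1))"
  proof (cases "m = 0")
    case False
    hence "m \<ge> 2" using m by simp
    have "(\<Sum>i<m. model_counit i * z i) =
        (\<Sum>i<m. (if i = 0 then mu * z i else 0) + (if i = m - 1 then z i else 0))"
      by (rule sum.cong) (auto simp: model_counit_def algebra_simps)
    also have "\<dots> = mu * z 0 + z (m - 1)" using \<open>m \<ge> 2\<close> by (simp add: sum.distrib)
    finally show ?thesis using False by simp
  qed simp
  finally show ?thesis .
qed

text \<open>Testing against the idempotent \<open>f\<^sub>t\<close> isolates the coordinate \<open>x\<^sub>m\<^sub>+\<^sub>t\<close>.\<close>
lemma model_nondegenerate_idempotent: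
  assumes nd: "\<And>y. y \<in> vecs model_dim \<Longrightarrow> counit model_dim model_counit (model_mult x y) = 0"
    and t: "t < N"
  shows "x (m + t) = 0"
proof -
  define y :: "nat \<Rightarrow> 'k" where "y = bvec (m + t)"
  have y: "y \<in> vecs model_dim" unfolding y_def using t by (simp add: model_dim_def)
  have "model_mult x y l = 0" if "l < m" for l
    using that by (simp add: y_def model_mult_bvec_low)
  hence "counit model_dim model_counit (model_mult x y) = (\<Sum>t'<N. model_mult x y (m + t') / lam t')"
    using m by (simp add: counit_model)
  also have "\<dots> = x (m + t) / lam t"
    using t by (subst sum_eq_single[of _ t]) (auto simp: model_mult_high model_dim_def y_def bvec_def)
  finally show ?thesis using nd[OF y] lam_nonzero[OF t] by simp
qed

text \<open>Testing against \<open>x\<^sup>m\<^sup>-\<^sup>1\<^sup>-\<^sup>a\<close>, for \<open>a\<close> the lowest nonzero polynomial coordinate, isolates \<open>x\<^sub>a\<close>.\<close>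
lemma model_nondegenerate_nilpotent:
  assumes nd: "\<And>y. y \<in> vecs model_dim \<Longrightarrow> counit model_dim model_counit (model_mult x y) = 0"
    and a: "a < m"
  shows "x a = 0"
proof (rule ccontr)
  assume "x a \<noteq> 0"
  define a0 where "a0 = (LEAST a. a < m \<and> x a \<noteq> 0)"
  have a0: "a0 < m" "x a0 \<noteq> 0"
    using LeastI[of "\<lambda>a. a < m \<and> x a \<noteq> 0" a] a \<open>x a \<noteq> 0\<close> unfolding a0_def by auto
  have below: "x b = 0" if "b < a0" for b
    using not_less_Least[of b "\<lambda>a. a < m \<and> x a \<noteq> 0"] that a0 unfolding a0_def by fastforce
  have m2: "m \<ge> 2" using m a0 by auto
  define y :: "nat \<Rightarrow> 'k" where "y = bvec (m - 1 - a0)"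
  have y: "y \<in> vecs model_dim" unfolding y_def using m2 by (simp add: model_dim_def)
  have "model_mult x y 0 = 0"
    using m2 below[of 0] a0 by (auto simp: y_def model_mult_bvec_low)
  moreover have "model_mult x y (m - 1) = x a0"
    using m2 a0 by (simp add: y_def model_mult_bvec_low)
  moreover have "model_mult x y (m + t) = 0" if "t < N" for t
    using that a0 m2 by (simp add: model_mult_high model_dim_def y_def bvec_def)
  ultimately have "counit model_dim model_counit (model_mult x y) = x a0"
    using m2 by (simp add: counit_model)
  thus False using nd[OF y] a0 by simp
qed

lemma model_nondegenerate:
  assumes x: "x \<in> vecs model_dim"
    and nd: "\<And>y. y \<in> vecs model_dim \<Longrightarrow> counit model_dim model_counit (model_mult x y) = 0"
  shows "x = (\<lambda>_. 0)"
proof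
  fix l
  show "x l = 0"
  proof (cases "l < m")
    case False
    show ?thesis
    proof (cases "l - m < N")
      case True
      thus ?thesis using model_nondegenerate_idempotent[OF nd, of "l - m"] False by simp
    qed (use x False in \<open>simp add: vecs_def model_dim_def\<close>)
  qed (rule model_nondegenerate_nilpotent[OF nd])
qed

lemma model_comm_frobenius: "comm_frobenius model_dim model_coeffs model_one model_counit"
  unfolding comm_frobenius_def amult_model
  using model_mult_commute model_mult_assoc model_one_vecs model_one_mult model_nondegenerate by blast

sublocale comm_frobenius_algebra model_dim model_coeffs model_one model_counit
  by (rule comm_frobenius_algebra.intro[OF model_comm_frobenius])

lemma model_mult_handle_low:
  assumes "l < m"
  shows "model_mult model_handle z l = (if l = m - 1 then of_nat m * z 0 else 0)"
proof -
  have "model_mult model_handle z l = (\<Sum>i=0..l. model_handle i * z (l - i))"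
    using assms by (simp add: model_mult_def fps_mult_nth)
  also have "\<dots> = (if l = m - 1 then of_nat m * z 0 else 0)"
  proof (cases "l = m - 1")
    case True
    thus ?thesis using assms by (subst sum_eq_single[of _ l]) (auto simp: model_handle_def)
  qed (use assms in \<open>auto simp: model_handle_def intro!: sum.neutral\<close>)
  finally show ?thesis .
qed

lemma mat_trace_lmult_mat_model:
  "mat_trace (lmult_mat model_dim model_coeffs y) = of_nat m * y 0 + (\<Sum>t<N. y (m + t))"
proof -
  have "mat_trace (lmult_mat model_dim model_coeffs y) = (\<Sum>i<model_dim. model_mult y (bvec i) i)"
    by (simp add: mat_trace_def lmult_mat_index amult_model)
  also have "\<dots> = (\<Sum>i<m. model_mult y (bvec i) i) + (\<Sum>t<N. model_mult y (bvec (m + t)) (m + t))"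
    by (rule sum_model_dim)
  also have "(\<Sum>i<m. model_mult y (bvec i) i) = (\<Sum>i<m. y 0)"
    by (rule sum.cong) (auto simp: model_mult_bvec_low)
  also have "(\<Sum>t<N. model_mult y (bvec (m + t)) (m + t)) = (\<Sum>t<N. y (m + t))"
    by (rule sum.cong) (auto simp: model_mult_high model_dim_def bvec_def)
  finally show ?thesis by simp
qed

lemma counit_model_handle_mult:
  "counit model_dim model_counit (model_mult model_handle y) = mat_trace (lmult_mat model_dim model_coeffs y)"
proof -
  have "(if m = 0 then 0 else mu * model_mult model_handle y 0 + model_mult model_handle y (m - 1))
      = of_nat m * y 0"
    using m by (auto simp: model_mult_handle_low)
  moreover have "(\<Sum>t<N. model_mult model_handle y (m + t) / lam t) = (\<Sum>t<N. y (m + t))"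
    by (rule sum.cong) (auto simp: model_mult_high model_dim_def model_handle_def lam_nonzero)
  ultimately show ?thesis by (simp add: counit_model mat_trace_lmult_mat_model)
qed

text \<open>By nondegeneracy, \<open>\<epsilon>(h y) = tr(L\<^sub>y)\<close> for all \<open>y\<close> determines \<open>h\<close>.\<close>
lemma handle_model: "handle model_dim model_coeffs model_counit = model_handle"
proof -
  define D where "D = (\<lambda>l. handle model_dim model_coeffs model_counit l - 1 * model_handle l)"
  have D: "D \<in> vecs model_dim" unfolding D_def using handle_vecs model_handle_vecs by (simp add: vecs_def)
  have "D = (\<lambda>_. 0)"
  proof (rule nondegenerate[OF D])
    fix y :: "nat \<Rightarrow> 'k" assume y: "y \<in> vecs model_dim"
    show "counit model_dim model_counit (amult model_dim model_coeffs D y) = 0"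
      unfolding D_def amult_diff_left counit_diff
      using counit_handle_mult[OF y] counit_model_handle_mult by (simp add: amult_model)
  qed
  thus ?thesis unfolding D_def by (simp add: fun_eq_iff)
qed

definition model_handle_pow :: "nat \<Rightarrow> nat \<Rightarrow> 'k" where
  "model_handle_pow g l = (if l < m then (if g = 0 then model_one l else if g = 1 then model_handle l else 0)
     else if l < model_dim then lam (l - m) ^ g else 0)"

lemma model_handle_pow: "(model_mult model_handle ^^ g) model_one = model_handle_pow g"
proof (induct g)
  case 0
  show ?case by (rule ext) (simp add: model_handle_pow_def model_one_def)
next
  case (Suc g)
  have "model_mult model_handle (model_handle_pow g) l = model_handle_pow (Suc g) l" for l
  proof (cases "l < m")
    case True
    hence "m \<ge> 2" using m by auto
    hence "model_handle_pow g 0 = (if g = 0 then 1 else 0)"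
      by (simp add: model_handle_pow_def model_one_def model_handle_def)
    thus ?thesis using True \<open>m \<ge> 2\<close>
      by (simp add: model_mult_handle_low model_handle_pow_def model_handle_def model_one_def)
  next
    case False
    thus ?thesis by (simp add: model_mult_def model_handle_pow_def model_handle_def)
  qed
  thus ?case using Suc by auto
qed

lemma genfun_model_nth:
  "fps_nth (genfun model_dim model_coeffs model_one model_counit) g =
    (if g = 0 then mu + (\<Sum>t<N. 1 / lam t)
     else (if g = 1 then of_nat m else 0) + (\<Sum>t<N. lam t ^ (g - 1)))"
proof -
  have "amult model_dim model_coeffs (handle model_dim model_coeffs model_counit) = model_mult model_handle"
    by (rule ext) (simp add: amult_model handle_model)
  hence "fps_nth (genfun model_dim model_coeffs model_one model_counit) g =
      counit model_dim model_counit (model_handle_pow g)"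
    by (simp add: genfun_def model_handle_pow)
  moreover have "(if m = 0 then 0 else mu * model_handle_pow g 0 + model_handle_pow g (m - 1)) =
      (if g = 0 then mu else if g = 1 then of_nat m else 0)"
  proof (cases "m = 0")
    case False
    hence "m \<ge> 2" using m by simp
    thus ?thesis by (simp add: model_handle_pow_def model_one_def model_handle_def)
  qed (simp add: mu)
  moreover have "(\<Sum>t<N. model_handle_pow g (m + t) / lam t) = (\<Sum>t<N. lam t ^ g / lam t)"
    by (rule sum.cong) (auto simp: model_handle_pow_def model_dim_def)
  moreover have "(\<Sum>t<N. lam t ^ g / lam t) = (\<Sum>t<N. lam t ^ (g - 1))" if "g > 0"
    using that by (intro sum.cong) (auto simp: lam_nonzero power_eq_if)
  ultimately show ?thesis by (cases "g = 0") (auto simp: counit_model)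
qed

end

text \<open>Multiplicities \<open>m\<^sub>i\<close> are realized by repeating \<open>\<lambda>\<^sub>i\<close>, one idempotent per copy.\<close>
lemma exists_comm_frobenius_genfun:
  fixes mu :: "'k::field" and lams :: "nat \<Rightarrow> 'k"
  assumes m: "m = 0 \<or> m \<ge> 2" and mu: "m = 0 \<Longrightarrow> mu = 0" and lams: "\<forall>i<s. lams i \<noteq> 0"
  shows "\<exists>r c u e. comm_frobenius r c u e \<and>
     genfun r c u e = fps_const mu + fps_const (of_nat m) * fps_X + geom_part s ms lams"
proof -
  define S where "S = (SIGMA i:{..<s}. {..<ms i})"
  have "finite S" unfolding S_def by simp
  obtain lam where sums: "\<And>f :: 'k \<Rightarrow> 'k. (\<Sum>t<card S. f (lam t)) = (\<Sum>x\<in>S. f (lams (fst x)))"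
    and lam: "\<And>t. t < card S \<Longrightarrow> lam t \<in> (\<lambda>x. lams (fst x)) ` S"
    using finite_sum_enumeration[OF \<open>finite S\<close>, of "\<lambda>x. lams (fst x)"] by metis
  have mult_sums: "(\<Sum>t<card S. f (lam t)) = (\<Sum>i<s. of_nat (ms i) * f (lams i))" for f :: "'k \<Rightarrow> 'k"
  proof -
    have "(\<Sum>x\<in>S. f (lams (fst x))) = (\<Sum>i<s. \<Sum>j<ms i. f (lams i))"
      unfolding S_def by (subst sum.Sigma) (auto simp: split_beta)
    thus ?thesis using sums by simp
  qed
  have "lam t \<noteq> 0" if "t < card S" for t
    using lam[OF that] lams unfolding S_def by fastforce
  then interpret model_algebra m "card S" mu lam
    using m mu by unfold_locales auto
  have "genfun model_dim model_coeffs model_one model_counit =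
      fps_const mu + fps_const (of_nat m) * fps_X + geom_part s ms lams"
  proof (rule fps_ext)
    fix g
    show "fps_nth (genfun model_dim model_coeffs model_one model_counit) g =
        fps_nth (fps_const mu + fps_const (of_nat m) * fps_X + geom_part s ms lams) g"
    proof (cases g)
      case 0
      thus ?thesis using mult_sums[of "\<lambda>x. 1 / x"] by (simp add: genfun_model_nth geom_part_nth)
    next
      case (Suc g')
      have "(\<Sum>i<s. of_nat (ms i) * lams i ^ g') = (\<Sum>i<s. of_nat (ms i) / lams i * lams i ^ Suc g')"
        using lams by (intro sum.cong) auto
      thus ?thesis using Suc mult_sums[of "\<lambda>x. x ^ g'"]
        by (simp add: genfun_model_nth geom_part_nth fps_X_nth)
    qed
  qed
  thus ?thesis using model_comm_frobenius by blast
qed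

theorem mainTheorem10:
  fixes k_type :: "'k::alg_closed_field itself"
  shows "(\<forall>r (c :: nat \<Rightarrow> nat \<Rightarrow> nat \<Rightarrow> 'k) u e. comm_frobenius r c u e \<longrightarrow>
            form1 (genfun r c u e) \<or> form2 (genfun r c u e)) \<and>
         (\<forall>F :: 'k fps. form1 F \<or> form2 F \<longrightarrow>
            (\<exists>r c u e. comm_frobenius r c u e \<and> genfun r c u e = F))"
proof (intro conjI allI impI)
  show "form1 (genfun r c u e) \<or> form2 (genfun r c u e)" if "comm_frobenius r c u e"
    for r and c :: "nat \<Rightarrow> nat \<Rightarrow> nat \<Rightarrow> 'k" and u e
    using genfun_form1_or_form2[OF that] .
  fix F :: "'k fps"
  assume "form1 F \<or> form2 F"
  then consider mu m s ms lams where "m \<ge> 2" "\<forall>i<s. ms i \<ge> 1 \<and> lams i \<noteq> 0"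
      "F = fps_const mu + fps_const (of_nat m) * fps_X + geom_part s ms lams"
    | s ms lams where "\<forall>i<s. ms i \<ge> 1 \<and> lams i \<noteq> 0" "F = geom_part s ms lams"
    unfolding form1_def form2_def by blast
  thus "\<exists>r c u e. comm_frobenius r c u e \<and> genfun r c u e = F"
  proof cases
    case (1 mu m s ms lams)
    thus ?thesis using exists_comm_frobenius_genfun[of m mu s lams ms] by auto
  next
    case (2 s ms lams)
    thus ?thesis using exists_comm_frobenius_genfun[of 0 0 s lams ms] by auto
  qed
qed

end
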